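(* Let $K$ be a field and let $M,N\in M_n(K)$ be two simultaneously diagonalizable matrices. Let $t$ be drawn from the uniform distribution on a finite set $S\subset K$. Then with probability at least $1-\frac{n(n-1)}{2|S|}$, every invertible matrix $T$ such that $T^{-1}(M+tN)T$ is diagonal also satisfies that $T^{-1}MT$ and $T^{-1}NT$ are diagonal. *)

theory Defs
  imports "Jordan_Normal_Form.Matrix" "HOL-Probability.Probability_Mass_Function"
begin

definition simul_diagonalizable :: "nat \<Rightarrow> 'a::field mat \<Rightarrow> 'a mat \<Rightarrow> bool" where
  "simul_diagonalizable n M N \<longleftrightarrow>
     (\<exists>P Q. P \<in> carrier_mat n n \<and> Q \<in> carrier_mat n n \<and>
            P * Q = 1\<^sub>m n \<and> Q * P = 1\<^sub>m n \<and>
            diagonal_mat (Q * M * P) \<and> diagonal_mat (Q * N * P))"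

end

theory Submission
  imports Defs
begin

text \<open>
  Write \<open>Q M P = diag a\<close> and \<open>Q N P = diag b\<close>. Unless \<open>t\<close> is one of the at most
  \<open>n(n-1)/2\<close> points where two distinct lines \<open>a\<^sub>i + t b\<^sub>i\<close> meet, the diagonal of
  \<open>D = Q (M + t N) P\<close> separates every pair of indices that \<open>(a, b)\<close> separates, so
  \<open>diag a = g(D)\<close> and \<open>diag b = h(D)\<close> for functions \<open>g, h\<close> applied entrywise. If \<open>T\<close>
  diagonalizes \<open>M + t N\<close>, then \<open>R = Q T\<close> intertwines \<open>D\<close> with a diagonal \<open>E\<close>:
  \<open>D R = R E\<close>. Entrywise this says \<open>D\<^sub>i\<^sub>i = E\<^sub>k\<^sub>k\<close> whenever \<open>R\<^sub>i\<^sub>k \<noteq> 0\<close>, hence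
  also \<open>g(D) R = R g(E)\<close>, and \<open>T\<close> diagonalizes \<open>M\<close> and \<open>N\<close> as well.
\<close>

lemma diagonal_mat_eq_mat_diag:
  assumes "D \<in> carrier_mat n n" and "diagonal_mat D"
  shows "D = mat_diag n (\<lambda>i. D $$ (i,i))"
  using assms unfolding diagonal_mat_def mat_diag_def by (auto intro!: eq_matI)

lemma diagonal_mat_mat_diag: "diagonal_mat (mat_diag n f)"
  unfolding diagonal_mat_def mat_diag_def by simp

lemma mat_diag_cong: "(\<And>i. i < n \<Longrightarrow> f i = g i) \<Longrightarrow> mat_diag n f = mat_diag n g"
  unfolding mat_diag_def by (auto intro!: eq_matI)

lemma mult_inverse_mat_compose:
  fixes A A' B B' :: "'a::semiring_1 mat"
  assumes "A \<in> carrier_mat n n" "A' \<in> carrier_mat n n" "B \<in> carrier_mat n n" "B' \<in> carrier_mat n n"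
    and "A * A' = 1\<^sub>m n" and "B * B' = 1\<^sub>m n"
  shows "(A * B) * (B' * A') = 1\<^sub>m n"
proof -
  have "(A * B) * (B' * A') = A * (B * B') * A'"
    using assms(1-4) by (simp add: assoc_mult_mat[of _ n n _ n _ n])
  then show ?thesis using assms by simp
qed

lemma conj_mat_split:
  fixes P Q T Ti X :: "'a::semiring_1 mat"
  assumes "P \<in> carrier_mat n n" "Q \<in> carrier_mat n n" "T \<in> carrier_mat n n" "Ti \<in> carrier_mat n n"
    "X \<in> carrier_mat n n" and "P * Q = 1\<^sub>m n"
  shows "Ti * X * T = (Ti * P) * (Q * X * P) * (Q * T)"
proof -
  have "(Ti * P) * (Q * X * P) * (Q * T) = Ti * (P * Q) * X * (P * Q) * T"
    using assms(1-5) by (simp add: assoc_mult_mat[of _ n n _ n _ n])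
  then show ?thesis using assms by simp
qed

lemma mat_diag_intertwiner_nonzero_entry:
  fixes R :: "'a::idom mat"
  assumes R: "R \<in> carrier_mat n m" and intertw: "mat_diag n d * R = R * mat_diag m e"
    and "i < n" and "k < m" and "R $$ (i,k) \<noteq> 0"
  shows "d i = e k"
proof -
  have "d i * R $$ (i,k) = R $$ (i,k) * e k"
    using arg_cong[OF intertw, of "\<lambda>A. A $$ (i,k)"] assms
    by (simp add: mat_diag_mult_left[OF R] mat_diag_mult_right[OF R])
  then show ?thesis using \<open>R $$ (i,k) \<noteq> 0\<close> by (simp add: mult.commute)
qed

lemma mat_diag_intertwiner_comp:
  fixes R :: "'a::idom mat"
  assumes R: "R \<in> carrier_mat n m" and intertw: "mat_diag n d * R = R * mat_diag m e"
  shows "mat_diag n (g \<circ> d) * R = R * mat_diag m (g \<circ> e)"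
  using mat_diag_intertwiner_nonzero_entry[OF R intertw] R
  by (auto simp: mat_diag_mult_left[OF R] mat_diag_mult_right[OF R] intro!: eq_matI) metis

lemma conj_mat_diag_comp:
  fixes R Ri :: "'a::idom mat"
  assumes R: "R \<in> carrier_mat n n" and Ri: "Ri \<in> carrier_mat n n"
    and "R * Ri = 1\<^sub>m n" and "Ri * R = 1\<^sub>m n"
    and conj: "Ri * mat_diag n d * R = mat_diag n e"
  shows "Ri * mat_diag n (g \<circ> d) * R = mat_diag n (g \<circ> e)"
proof -
  have "mat_diag n d * R = (R * Ri) * mat_diag n d * R"
    using \<open>R * Ri = 1\<^sub>m n\<close> by (simp add: left_mult_one_mat[OF mat_diag_dim])
  also have "\<dots> = R * (Ri * mat_diag n d * R)"
    using R Ri by (simp add: assoc_mult_mat[of _ n n _ n _ n])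
  finally have "mat_diag n d * R = R * mat_diag n e"
    using conj by simp
  then have intertw: "mat_diag n (g \<circ> d) * R = R * mat_diag n (g \<circ> e)"
    by (rule mat_diag_intertwiner_comp[OF R])
  have "Ri * mat_diag n (g \<circ> d) * R = Ri * (mat_diag n (g \<circ> d) * R)"
    using R Ri by (simp add: assoc_mult_mat[of _ n n _ n _ n])
  also have "\<dots> = (Ri * R) * mat_diag n (g \<circ> e)"
    unfolding intertw using R Ri by (simp add: assoc_mult_mat[of _ n n _ n _ n])
  finally show ?thesis
    using \<open>Ri * R = 1\<^sub>m n\<close> by (simp add: left_mult_one_mat[OF mat_diag_dim])
qed

lemma diagonal_conj_mat_diag_if_coarser:
  fixes R Ri :: "'a::idom mat"
  assumes R: "R \<in> carrier_mat n n" and Ri: "Ri \<in> carrier_mat n n"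
    and inv: "R * Ri = 1\<^sub>m n" "Ri * R = 1\<^sub>m n"
    and diag: "diagonal_mat (Ri * mat_diag n d * R)"
    and coarser: "\<And>i j. i < n \<Longrightarrow> j < n \<Longrightarrow> d i = d j \<Longrightarrow> d' i = d' j"
  shows "diagonal_mat (Ri * mat_diag n d' * R)"
proof -
  define g where "g x = d' (SOME i. i < n \<and> d i = x)" for x
  have "d' i = g (d i)" if "i < n" for i
    using someI[of "\<lambda>j. j < n \<and> d j = d i", OF conjI[OF that refl]] coarser that
    unfolding g_def by metis
  then have d': "mat_diag n d' = mat_diag n (g \<circ> d)"
    by (auto intro: mat_diag_cong)
  define E where "E = Ri * mat_diag n d * R"
  have "E = mat_diag n (\<lambda>k. E $$ (k,k))"
    using diag R Ri unfolding E_def by (intro diagonal_mat_eq_mat_diag) auto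
  then have "Ri * mat_diag n (g \<circ> d) * R = mat_diag n (g \<circ> (\<lambda>k. E $$ (k,k)))"
    using conj_mat_diag_comp[OF R Ri inv] unfolding E_def by metis
  then show ?thesis
    unfolding d' by (simp add: diagonal_mat_mat_diag)
qed

definition affine_collisions :: "nat \<Rightarrow> (nat \<Rightarrow> 'a::field) \<Rightarrow> (nat \<Rightarrow> 'a) \<Rightarrow> 'a set" where
  "affine_collisions n a b =
     {t. \<exists>i<n. \<exists>j<n. (a i, b i) \<noteq> (a j, b j) \<and> a i + t * b i = a j + t * b j}"

lemma affine_collisions_subset:
  "affine_collisions n a b \<subseteq> (\<lambda>(j,i). (a j - a i) / (b i - b j)) ` (SIGMA j:{..<n}. {..<j})"
proof
  fix t assume "t \<in> affine_collisions n a b"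
  then obtain i j where ij: "i < n" "j < n" "(a i, b i) \<noteq> (a j, b j)"
    and meet: "a i + t * b i = a j + t * b j"
    unfolding affine_collisions_def by blast
  have "b i \<noteq> b j" using ij(3) meet by auto
  then have t: "t = (a j - a i) / (b i - b j)" "t = (a i - a j) / (b j - b i)"
    using meet by (auto simp: field_simps)
  have "i \<noteq> j" using ij(3) by auto
  then consider "i < j" | "j < i" by linarith
  then show "t \<in> (\<lambda>(j,i). (a j - a i) / (b i - b j)) ` (SIGMA j:{..<n}. {..<j})"
  proof cases
    case 1
    show ?thesis by (rule rev_image_eqI[of "(j,i)"]) (use ij t 1 in auto)
  next
    case 2
    show ?thesis by (rule rev_image_eqI[of "(i,j)"]) (use ij t 2 in auto)
  qed
qed

lemma finite_affine_collisions: "finite (affine_collisions n a b)"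
  using affine_collisions_subset by (rule finite_subset) auto

lemma card_affine_collisions_le: "card (affine_collisions n a b) \<le> n * (n - 1) div 2"
proof -
  have "card (affine_collisions n a b) \<le> card (SIGMA j:{..<n}. {..<j})"
    by (rule surj_card_le[OF _ affine_collisions_subset]) auto
  also have "\<dots> = n * (n - 1) div 2"
    by (simp add: lessThan_atLeast0 Sum_Ico_nat)
  finally show ?thesis .
qed

lemma diagonal_conj_mat_diag_components:
  fixes R Ri :: "'a::field mat"
  assumes R: "R \<in> carrier_mat n n" and Ri: "Ri \<in> carrier_mat n n"
    and inv: "R * Ri = 1\<^sub>m n" "Ri * R = 1\<^sub>m n"
    and generic: "t \<notin> affine_collisions n a b"
    and diag: "diagonal_mat (Ri * mat_diag n (\<lambda>i. a i + t * b i) * R)"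
  shows "diagonal_mat (Ri * mat_diag n a * R) \<and> diagonal_mat (Ri * mat_diag n b * R)"
proof -
  have levels: "a i = a j \<and> b i = b j" if "i < n" "j < n" "a i + t * b i = a j + t * b j" for i j
    using generic that unfolding affine_collisions_def by blast
  show ?thesis
    using diagonal_conj_mat_diag_if_coarser[OF R Ri inv diag] levels by blast
qed

lemma diagonal_conj_of_generic_combination:
  fixes M N P Q T Ti :: "'a::field mat"
  assumes M: "M \<in> carrier_mat n n" and N: "N \<in> carrier_mat n n"
    and P: "P \<in> carrier_mat n n" and Q: "Q \<in> carrier_mat n n"
    and PQ: "P * Q = 1\<^sub>m n" and QP: "Q * P = 1\<^sub>m n"
    and QMP: "Q * M * P = mat_diag n a" and QNP: "Q * N * P = mat_diag n b"
    and generic: "t \<notin> affine_collisions n a b"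
    and T: "T \<in> carrier_mat n n" and Ti: "Ti \<in> carrier_mat n n"
    and TTi: "T * Ti = 1\<^sub>m n" and TiT: "Ti * T = 1\<^sub>m n"
    and diag: "diagonal_mat (Ti * (M + t \<cdot>\<^sub>m N) * T)"
  shows "diagonal_mat (Ti * M * T) \<and> diagonal_mat (Ti * N * T)"
proof -
  have R: "Q * T \<in> carrier_mat n n" and Ri: "Ti * P \<in> carrier_mat n n"
    using P Q T Ti by auto
  have inv: "(Q * T) * (Ti * P) = 1\<^sub>m n" "(Ti * P) * (Q * T) = 1\<^sub>m n"
    by (rule mult_inverse_mat_compose[OF Q P T Ti QP TTi],
        rule mult_inverse_mat_compose[OF Ti T P Q TiT PQ])
  have conj: "Ti * X * T = (Ti * P) * (Q * X * P) * (Q * T)" if "X \<in> carrier_mat n n" for X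
    using conj_mat_split[OF P Q T Ti that PQ] .
  have "Q * (M + t \<cdot>\<^sub>m N) * P = Q * M * P + t \<cdot>\<^sub>m (Q * N * P)"
    using P Q M N
    by (simp add: mult_add_distrib_mat[of _ n n] add_mult_distrib_mat[of _ n n]
        mult_smult_distrib[of _ n n] mult_smult_assoc_mat[of _ n n])
  also have "\<dots> = mat_diag n (\<lambda>i. a i + t * b i)"
    unfolding QMP QNP mat_diag_def by (auto intro!: eq_matI)
  finally have "diagonal_mat ((Ti * P) * mat_diag n (\<lambda>i. a i + t * b i) * (Q * T))"
    using conj[of "M + t \<cdot>\<^sub>m N"] diag M N by simp
  then show ?thesis
    using diagonal_conj_mat_diag_components[OF R Ri inv generic] conj[OF M] conj[OF N]
    unfolding QMP QNP by simp
qed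

lemma measure_pmf_of_set_ge:
  assumes "finite S" "S \<noteq> {}" "finite B" "real (card B) \<le> c" "S - B \<subseteq> G"
  shows "measure_pmf.prob (pmf_of_set S) G \<ge> 1 - c / card S"
proof -
  have "card S \<le> card (S \<inter> G \<union> B)"
    using assms by (intro card_mono) auto
  also have "\<dots> \<le> card (S \<inter> G) + card B"
    by (rule card_Un_le)
  finally have "real (card S) - c \<le> card (S \<inter> G)"
    using assms(4) by linarith
  have "card S > 0"
    using assms by (simp add: card_gt_0_iff)
  then have "1 - c / card S = (real (card S) - c) / card S"
    by (simp add: field_simps)
  also have "\<dots> \<le> card (S \<inter> G) / card S"
    by (rule divide_right_mono) (fact, simp)
  also have "\<dots> = measure_pmf.prob (pmf_of_set S) G"
    using assms by (simp add: measure_pmf_of_set)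
  finally show ?thesis .
qed

theorem proposition2:
  fixes M N :: "'a::field mat" and n :: nat and S :: "'a set"
  assumes "M \<in> carrier_mat n n" and "N \<in> carrier_mat n n"
    and "simul_diagonalizable n M N"
    and "finite S" and "S \<noteq> {}"
  shows "measure_pmf.prob (pmf_of_set S)
           {t. \<forall>T Ti. T \<in> carrier_mat n n \<longrightarrow> Ti \<in> carrier_mat n n \<longrightarrow>
                  T * Ti = 1\<^sub>m n \<longrightarrow> Ti * T = 1\<^sub>m n \<longrightarrow>
                  diagonal_mat (Ti * (M + t \<cdot>\<^sub>m N) * T) \<longrightarrow>
                  diagonal_mat (Ti * M * T) \<and> diagonal_mat (Ti * N * T)}
         \<ge> 1 - real (n * (n - 1)) / (2 * real (card S))"
    (is "measure_pmf.prob _ ?G \<ge> _")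
proof -
  obtain P Q where P: "P \<in> carrier_mat n n" and Q: "Q \<in> carrier_mat n n"
    and PQ: "P * Q = 1\<^sub>m n" and QP: "Q * P = 1\<^sub>m n"
    and "diagonal_mat (Q * M * P)" and "diagonal_mat (Q * N * P)"
    using assms(3) unfolding simul_diagonalizable_def by blast
  define a where "a i = (Q * M * P) $$ (i,i)" for i
  define b where "b i = (Q * N * P) $$ (i,i)" for i
  have QMP: "Q * M * P = mat_diag n a" and QNP: "Q * N * P = mat_diag n b"
    unfolding a_def b_def using \<open>diagonal_mat (Q * M * P)\<close> \<open>diagonal_mat (Q * N * P)\<close> P Q assms(1,2)
    by (auto intro!: diagonal_mat_eq_mat_diag)
  have generic: "S - affine_collisions n a b \<subseteq> ?G"
    using diagonal_conj_of_generic_combination[OF assms(1,2) P Q PQ QP QMP QNP] by blast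
  have "2 * card (affine_collisions n a b) \<le> n * (n - 1)"
    using card_affine_collisions_le[of n a b] by linarith
  then have "real (2 * card (affine_collisions n a b)) \<le> real (n * (n - 1))"
    by (rule of_nat_mono)
  then have bound: "real (card (affine_collisions n a b)) \<le> real (n * (n - 1)) / 2"
    by simp
  have "measure_pmf.prob (pmf_of_set S) ?G \<ge> 1 - (real (n * (n - 1)) / 2) / card S"
    by (rule measure_pmf_of_set_ge[OF assms(4,5) finite_affine_collisions bound generic])
  then show ?thesis
    by simp
qed

end
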